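(* Let $n\ge1$, $x_1\ge\dots\ge x_n>0$, and let $\xi$, $\pi$, $Z^{x,q}$, $T_{l;j-k}$ and $\zeta^{l;j-k}$ be as in the context. Let $j\le k\le l$ be indices in $[n]$ such that $k=l$ implies $j=l$, and fix $q>0$. Then, almost surely on the event $\{T_{l;j-k}\le q\}$, the cumulative arrival rate of $\zeta^{l;j-k}$ up to time $q$, namely $(q-T_{l;j-k})\,r_{l;j-k}$, equals $q$ times the area of the region $R_{l;j-k}(q)$ matched to $\zeta^{l;j-k}$ at time $q$. In particular, for $l>k$: $(q-T_{l;j-k})\,x_{\pi_l}(x_{\pi_j}+\dots+x_{\pi_k})=q\cdot \mathrm{Area}(R_{l;j-k}(q))$.
   Context: Vertex $i\in[n]$ has mass $x_i$. Let $\xi_1,\dots,\xi_n$ be independent, $\xi_i$ exponential of rate $x_i$, order statistics $\xi_{(1)}<\dots<\xi_{(n)}$, permutation $\pi$ with $\xi_{\pi_i}=\xi_{(i)}$, $\xi^q_{(i)}=\xi_{(i)}/q$. Simultaneous breadth-first walk: $Z^{x,q}(s)=\sum_{i=1}^n x_i\mathbf 1(\xi_i/q\le s)-s$, $s\ge0$, $q>0$; $Z^{x,q}(u-)$ denotes the left limit. Forest $\mathcal F_0(q)$: intervals $I^q_i=(a_i,b_i]$ with $I^q_1=(\xi^q_{(1)},\xi^q_{(1)}+x_{\pi_1}]$; for $i\ge2$, if $\xi^q_{(i)}\le b_{i-1}$ ($\pi_i$ non-root) then $I^q_i=(a_{i-1},b_{i-1}+x_{\pi_i}]$, else ($\pi_i$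 root) $I^q_i=(\xi^q_{(i)},\xi^q_{(i)}+x_{\pi_i}]$. The components (trees) of $\mathcal F_0(q)$ are the blocks $\{\pi_i,\dots,\pi_m\}$ consisting of a root $\pi_i$ and the subsequent non-roots up to the next root; they correspond to the excursions of $Z^{x,q}$ above its running infimum. For $j\le k<l$, $T_{l;j-k}$ is the (possibly infinite) time at which the component of $\mathcal F_0$ containing $\pi_l$ merges with a component consisting of exactly $\{\pi_j,\dots,\pi_k\}$; for $j=k=l$, $T_{l;l-l}=0$. The process $\zeta^{l;j-k}$ is a Poisson process active after $T_{l;j-k}$ with rate $r_{l;j-k}=x_{\pi_l}(x_{\pi_j}+\dots+x_{\pi_k})$ if $l>k$, and $r_{l;l-l}=x_{\pi_l}^2/2$. Matched regions at time $z$: for $j=k=l$, $R_{l;l-l}(z)$ is the triangle with vertices $(\xi^z_{(l)},Z^{x,z}(\xi^z_{(l)}-))$, $(\xi^z_{(l)},Z^{x,z}(\xi^z_{(l)}))$, $(\xi^z_{(l)}+x_{\pi_l},Z^{x,z}(\xi^z_{(l)}-))$. For $l>k$ and $z>T_{l;j-k}$, $R_{l;j-k}(z)$ is the parallelogram in the $(x,y)$-plane bounded by the lines $y=-(x-\xi^z_{(l)})+Z^{x,z}(\xi^z_{(l)}-)$, $y=-(x-\xi^z_{(l)})+Z^{x,z}(\xi^z_{(l)})$, $y=Z^{x,z}(\xi^z_{(j)}-)$ and $y=Z^{x,z}(\xi^z_{(k+1)}-)$ (at $z=T_{l;j-k}$ it is degenerate with area $0$). *)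

theory Defs
  imports "HOL-Probability.Probability"
begin

text \<open>Deterministic objects built from a realisation xi of the exponential clocks.
Vertices are 1..n; x i is the mass of vertex i.\<close>

text \<open>pi_i: the vertex with the i-th smallest clock (well defined when the clocks are distinct).\<close>
definition sbw_perm :: "(nat \<Rightarrow> real) \<Rightarrow> nat \<Rightarrow> nat \<Rightarrow> nat" where
  "sbw_perm xi n i = (THE v. v \<in> {1..n} \<and> card {u \<in> {1..n}. xi u < xi v} + 1 = i)"

definition sbw_ostat :: "(nat \<Rightarrow> real) \<Rightarrow> nat \<Rightarrow> nat \<Rightarrow> real" where
  "sbw_ostat xi n i = xi (sbw_perm xi n i)"

definition sbw_Z :: "(nat \<Rightarrow> real) \<Rightarrow> (nat \<Rightarrow> real) \<Rightarrow> nat \<Rightarrow> real \<Rightarrow> real \<Rightarrow> real" where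
  "sbw_Z x xi n q s = (\<Sum>i\<in>{1..n}. if xi i / q \<le> s then x i else 0) - s"

definition sbw_Z_left :: "(nat \<Rightarrow> real) \<Rightarrow> (nat \<Rightarrow> real) \<Rightarrow> nat \<Rightarrow> real \<Rightarrow> real \<Rightarrow> real" where
  "sbw_Z_left x xi n q u = Lim (at_left u) (sbw_Z x xi n q)"

text \<open>Intervals I^q_i = (a_i, b_i] of the forest F_0(q), indexed i = 1..n (index 0 is a dummy).\<close>
fun sbw_iv :: "(nat \<Rightarrow> real) \<Rightarrow> (nat \<Rightarrow> real) \<Rightarrow> nat \<Rightarrow> real \<Rightarrow> nat \<Rightarrow> real \<times> real" where
  "sbw_iv x xi n q 0 = (0, 0)"
| "sbw_iv x xi n q (Suc i) =
     (let s = sbw_ostat xi n (Suc i) / q; m = x (sbw_perm xi n (Suc i)) in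
      if i = 0 then (s, s + m)
      else (case sbw_iv x xi n q i of (a, b) \<Rightarrow>
              if s \<le> b then (a, b + m) else (s, s + m)))"

definition sbw_root :: "(nat \<Rightarrow> real) \<Rightarrow> (nat \<Rightarrow> real) \<Rightarrow> nat \<Rightarrow> real \<Rightarrow> nat \<Rightarrow> bool" where
  "sbw_root x xi n q i \<longleftrightarrow> i = 1 \<or> \<not> (sbw_ostat xi n i / q \<le> snd (sbw_iv x xi n q (i - 1)))"

definition sbw_block_root :: "(nat \<Rightarrow> real) \<Rightarrow> (nat \<Rightarrow> real) \<Rightarrow> nat \<Rightarrow> real \<Rightarrow> nat \<Rightarrow> nat" where
  "sbw_block_root x xi n q i = Max {r \<in> {1..i}. sbw_root x xi n q r}"

definition sbw_comp :: "(nat \<Rightarrow> real) \<Rightarrow> (nat \<Rightarrow> real) \<Rightarrow> nat \<Rightarrow> real \<Rightarrow> nat \<Rightarrow> nat set" where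
  "sbw_comp x xi n q i = sbw_perm xi n ` {r \<in> {1..n}. sbw_block_root x xi n q r = sbw_block_root x xi n q i}"

definition sbw_merge_at :: "(nat \<Rightarrow> real) \<Rightarrow> (nat \<Rightarrow> real) \<Rightarrow> nat \<Rightarrow> nat \<Rightarrow> nat \<Rightarrow> nat \<Rightarrow> real \<Rightarrow> bool" where
  "sbw_merge_at x xi n j k l t \<longleftrightarrow> 0 < t \<and>
     eventually (\<lambda>s. sbw_comp x xi n s j = sbw_perm xi n ` {j..k} \<and>
                      sbw_perm xi n l \<notin> sbw_comp x xi n s j) (at_left t) \<and>
     sbw_comp x xi n t l = sbw_comp x xi n t j"

definition sbw_T :: "(nat \<Rightarrow> real) \<Rightarrow> (nat \<Rightarrow> real) \<Rightarrow> nat \<Rightarrow> nat \<Rightarrow> nat \<Rightarrow> nat \<Rightarrow> ereal" where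
  "sbw_T x xi n j k l = (if j = l \<and> k = l then 0
      else Inf {ereal t | t. sbw_merge_at x xi n j k l t})"

definition sbw_rate :: "(nat \<Rightarrow> real) \<Rightarrow> (nat \<Rightarrow> real) \<Rightarrow> nat \<Rightarrow> nat \<Rightarrow> nat \<Rightarrow> nat \<Rightarrow> real" where
  "sbw_rate x xi n j k l = (if k < l then x (sbw_perm xi n l) * (\<Sum>i=j..k. x (sbw_perm xi n i))
      else (x (sbw_perm xi n l))\<^sup>2 / 2)"

definition sbw_region :: "(nat \<Rightarrow> real) \<Rightarrow> (nat \<Rightarrow> real) \<Rightarrow> nat \<Rightarrow> nat \<Rightarrow> nat \<Rightarrow> nat \<Rightarrow> real \<Rightarrow> (real \<times> real) set" where
  "sbw_region x xi n j k l z =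
    (let s = sbw_ostat xi n l / z;
         Zm = sbw_Z_left x xi n z s; Z0 = sbw_Z x xi n z s in
     if k < l then
       (let h1 = sbw_Z_left x xi n z (sbw_ostat xi n j / z);
            h2 = sbw_Z_left x xi n z (sbw_ostat xi n (Suc k) / z) in
        {(a, b). min Zm Z0 \<le> b + (a - s) \<and> b + (a - s) \<le> max Zm Z0 \<and>
                 min h1 h2 \<le> b \<and> b \<le> max h1 h2})
     else convex hull {(s, Zm), (s, Z0), (s + x (sbw_perm xi n l), Zm)})"

end

theory Submission
  imports Defs
begin

text \<open>
Almost surely the clocks are pairwise distinct, and then the claim is deterministic.
Write \<open>\<xi>(i)\<close> for the \<open>i\<close>-th order statistic, \<open>m(i) = x(\<pi> i)\<close> and, for \<open>l > k\<close>,
\<open>S = m(j) + ... + m(k)\<close>. While \<open>{\<pi> j, ..., \<pi> k}\<close> is a tree of \<open>F\<^sub>0(s)\<close>, its interval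
ends at \<open>\<xi>(j)/s + S\<close>, strictly before the next clock \<open>\<xi>(k+1)/s\<close>. At a merge time \<open>t\<close>
with the tree of \<open>\<pi> l\<close>, \<open>\<pi> (k+1)\<close> is no longer a root, so continuity of the interval endpoint
in \<open>s\<close> forces \<open>\<xi>(k+1)/t = \<xi>(j)/t + S\<close>; hence a finite \<open>T\<close> equals \<open>(\<xi>(k+1) - \<xi>(j))/S\<close>.
The parallelogram \<open>R(q)\<close> lies between two lines of slope \<open>-1\<close> at vertical distance
\<open>Z(\<xi>(l)/q) - Z(\<xi>(l)/q-) = m(l)\<close> and two horizontal lines at distance
\<open>Z(\<xi>(k+1)/q-) - Z(\<xi>(j)/q-) = S - (\<xi>(k+1) - \<xi>(j))/q = S (1 - T/q)\<close>, so \<open>q\<close> times its area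
is \<open>(q - T) m(l) S\<close>. For \<open>j = k = l\<close> the region is a right isosceles triangle
with legs \<open>m(l)\<close>, and \<open>T = 0\<close>.
\<close>

subsection \<open>Two elementary areas\<close>

lemma measure_lborel_parallelogram:
  fixes A B C D s :: real
  shows "measure lborel {(a, b). min A B \<le> b + (a - s) \<and> b + (a - s) \<le> max A B \<and>
                                 min C D \<le> b \<and> b \<le> max C D} = \<bar>A - B\<bar> * \<bar>C - D\<bar>"
proof -
  define c1 c2 d1 d2 where "c1 = min A B" "c2 = max A B" "d1 = min C D" "d2 = max C D"
  define P where "P = {(a :: real, b :: real). c1 \<le> b + (a - s) \<and> b + (a - s) \<le> c2 \<and> d1 \<le> b \<and> b \<le> d2}"
  have "P = {p. c1 \<le> snd p + (fst p - s)} \<inter> {p. snd p + (fst p - s) \<le> c2}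
            \<inter> {p. d1 \<le> snd p} \<inter> {p. snd p \<le> d2}"
    unfolding P_def by auto
  then have "closed P"
    by (simp only:) (intro closed_Int closed_Collect_le continuous_intros)
  then have "P \<in> sets borel"
    by (rule borel_closed)
  then have P: "P \<in> sets (lborel \<Otimes>\<^sub>M lborel)"
    unfolding lborel_prod by simp
  have "c1 \<le> c2" "d1 \<le> d2"
    unfolding c1_c2_d1_d2_def by auto
  have "emeasure (lborel \<Otimes>\<^sub>M lborel) P = (\<integral>\<^sup>+b. emeasure lborel ((\<lambda>a. (a, b)) -` P) \<partial>lborel)"
    by (rule lborel_pair.emeasure_pair_measure_alt2[OF P])
  also have "\<dots> = (\<integral>\<^sup>+b. ennreal (c2 - c1) * indicator {d1..d2} b \<partial>lborel)"
  proof (intro nn_integral_cong)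
    fix b :: real
    have "(\<lambda>a. (a, b)) -` P = (if d1 \<le> b \<and> b \<le> d2 then {c1 - b + s .. c2 - b + s} else {})"
      unfolding P_def by auto
    then show "emeasure lborel ((\<lambda>a. (a, b)) -` P) = ennreal (c2 - c1) * indicator {d1..d2} b"
      using \<open>c1 \<le> c2\<close> by (simp add: indicator_def)
  qed
  also have "\<dots> = ennreal ((c2 - c1) * (d2 - d1))"
    using \<open>c1 \<le> c2\<close> \<open>d1 \<le> d2\<close> by (simp add: nn_integral_cmult_indicator ennreal_mult)
  finally have "measure lborel P = (c2 - c1) * (d2 - d1)"
    using \<open>c1 \<le> c2\<close> \<open>d1 \<le> d2\<close> by (simp add: lborel_prod measure_def)
  then show ?thesis
    unfolding P_def c1_c2_d1_d2_def by (simp add: min_def max_def abs_if)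
qed

lemma measure_lborel_right_triangle:
  fixes s h m :: real
  assumes "0 < m"
  shows "measure lborel (convex hull {(s, h), (s, h + m), (s + m, h)}) = m\<^sup>2 / 2"
proof -
  define K where "K = convex hull (insert 0 Basis :: (real \<times> real) set)"
  have "insert 0 (Basis :: (real \<times> real) set) = {(0, 0), (0, 1), (1, 0)}"
    by (auto simp: Basis_prod_def zero_prod_def)
  then have vertices: "{(s, h), (s, h + m), (s + m, h)} = (\<lambda>p. (s, h) + m *\<^sub>R p) ` insert 0 Basis"
    by auto
  have hull: "convex hull {(s, h), (s, h + m), (s + m, h)} = (\<lambda>p. m *\<^sub>R p + (s, h)) ` K"
    unfolding vertices K_def convex_hull_affinity by (simp add: add.commute)
  have "closed K" "closed (convex hull {(s, h), (s, h + m), (s + m, h)})"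
    unfolding K_def by (auto intro!: compact_imp_closed finite_imp_compact_convex_hull)
  then have "measure lborel (convex hull {(s, h), (s, h + m), (s + m, h)})
      = \<bar>m\<bar> ^ DIM(real \<times> real) * measure lborel K"
    using measure_lebesgue_affine[of m "(s, h)" K] unfolding hull
    by (simp add: measure_completion)
  also have "measure lborel K = 1 / fact DIM(real \<times> real)"
    unfolding K_def by (rule content_std_simplex)
  finally show ?thesis
    using assms by (simp add: power2_eq_square)
qed

subsection \<open>Independent variables with densities are almost surely distinct\<close>

lemma (in prob_space) indep_var_of_indep_vars:
  assumes "indep_vars M' X I" "i \<in> I" "i' \<in> I" "i \<noteq> i'"
  shows "indep_var (M' i) (X i) (M' i') (X i')"
proof -
  have "indep_var (PiM {i} M') (\<lambda>\<omega>. restrict (\<lambda>i. X i \<omega>) {i})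
                  (PiM {i'} M') (\<lambda>\<omega>. restrict (\<lambda>i. X i \<omega>) {i'})"
    using assms by (intro indep_var_restrict) auto
  then have "indep_var (M' i) ((\<lambda>f. f i) \<circ> (\<lambda>\<omega>. restrict (\<lambda>i. X i \<omega>) {i}))
                       (M' i') ((\<lambda>f. f i') \<circ> (\<lambda>\<omega>. restrict (\<lambda>i. X i \<omega>) {i'}))"
    by (rule indep_var_compose) (auto intro: measurable_component_singleton)
  then show ?thesis
    by (simp add: comp_def)
qed

lemma (in prob_space) AE_neq_if_indep_var_distributed:
  fixes X Y :: "'a \<Rightarrow> real"
  assumes indep: "indep_var borel X borel Y" and Y: "distributed M lborel Y g"
  shows "AE \<omega> in M. X \<omega> \<noteq> Y \<omega>"
proof -
  have X: "random_variable borel X" and rvY: "random_variable borel Y"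
    using indep by (auto dest: indep_var_rv1 indep_var_rv2)
  interpret PX: prob_space "distr M borel X" by (rule prob_space_distr[OF X])
  interpret PY: prob_space "distr M borel Y" by (rule prob_space_distr[OF rvY])
  interpret XY: pair_prob_space "distr M borel X" "distr M borel Y" ..
  have null: "{a} \<in> null_sets (distr M borel Y)" for a
  proof -
    have "emeasure (distr M borel Y) {a} = emeasure M (Y -` {a} \<inter> space M)"
      using rvY by (intro emeasure_distr) auto
    also have "\<dots> = (\<integral>\<^sup>+y. g y * indicator {a} y \<partial>lborel)"
      using Y by (intro distributed_emeasure) auto
    also have "\<dots> = (\<integral>\<^sup>+(y :: real). 0 \<partial>lborel)"
      by (intro nn_integral_cong_AE) (use AE_lborel_singleton[of a] in \<open>auto elim!: eventually_mono\<close>)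
    finally show ?thesis
      by (auto intro: null_setsI)
  qed
  have "AE p in distr M borel X \<Otimes>\<^sub>M distr M borel Y. fst p \<noteq> snd p"
  proof (rule XY.AE_pair_measure)
    have "{p :: real \<times> real. fst p \<noteq> snd p} \<in> sets (borel \<Otimes>\<^sub>M borel)"
      unfolding borel_prod by (intro borel_open open_Collect_neq continuous_intros)
    then show "{p \<in> space (distr M borel X \<Otimes>\<^sub>M distr M borel Y). fst p \<noteq> snd p}
        \<in> sets (distr M borel X \<Otimes>\<^sub>M distr M borel Y)"
      by (simp add: space_pair_measure)
  next
    show "AE a in distr M borel X. AE b in distr M borel Y. fst (a, b) \<noteq> snd (a, b)"
    proof (rule AE_I2)
      fix a :: real
      show "AE b in distr M borel Y. fst (a, b) \<noteq> snd (a, b)"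
        using AE_not_in[OF null[of a]] by eventually_elim auto
    qed
  qed
  moreover have "distr M borel X \<Otimes>\<^sub>M distr M borel Y = distr M (borel \<Otimes>\<^sub>M borel) (\<lambda>\<omega>. (X \<omega>, Y \<omega>))"
    using indep indep_var_distribution_eq by blast
  ultimately have "AE p in distr M (borel \<Otimes>\<^sub>M borel) (\<lambda>\<omega>. (X \<omega>, Y \<omega>)). fst p \<noteq> snd p"
    by (simp only:)
  from AE_distrD[OF measurable_Pair[OF X rvY] this] show ?thesis
    by simp
qed

lemma (in prob_space) AE_inj_on_if_indep_vars_distributed:
  fixes X :: "'i \<Rightarrow> 'a \<Rightarrow> real"
  assumes "finite I" "indep_vars (\<lambda>_. borel) X I" "\<forall>i\<in>I. distributed M lborel (X i) (f i)"
  shows "AE \<omega> in M. inj_on (\<lambda>i. X i \<omega>) I"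
proof -
  have "AE \<omega> in M. \<forall>i\<in>I. \<forall>i'\<in>I. i \<noteq> i' \<longrightarrow> X i \<omega> \<noteq> X i' \<omega>"
  proof (intro AE_finite_allI[OF assms(1)] AE_impI)
    fix i i' assume "i \<in> I" "i' \<in> I" "i \<noteq> i'"
    then have "indep_var borel (X i) borel (X i')"
      using indep_var_of_indep_vars[OF assms(2)] by simp
    moreover have "distributed M lborel (X i') (f i')"
      using assms(3) \<open>i' \<in> I\<close> by blast
    ultimately show "AE \<omega> in M. X i \<omega> \<noteq> X i' \<omega>"
      by (rule AE_neq_if_indep_var_distributed)
  qed
  then show ?thesis
    by eventually_elim (auto intro: inj_onI)
qed

subsection \<open>Order statistics of distinct clocks\<close>

definition sbw_rank :: "(nat \<Rightarrow> real) \<Rightarrow> nat \<Rightarrow> real \<Rightarrow> nat" where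
  "sbw_rank xi n t = card {u \<in> {1..n}. xi u < t} + 1"

lemma strict_mono_on_sbw_rank: "strict_mono_on (xi ` {1..n}) (sbw_rank xi n)"
proof (rule strict_mono_onI)
  fix t t' assume "t \<in> xi ` {1..n}" "t' \<in> xi ` {1..n}" "t < t'"
  then obtain v where v: "v \<in> {1..n}" "xi v = t"
    by auto
  have "{u \<in> {1..n}. xi u < t} \<subset> {u \<in> {1..n}. xi u < t'}"
  proof
    show "{u \<in> {1..n}. xi u < t} \<subseteq> {u \<in> {1..n}. xi u < t'}"
      using \<open>t < t'\<close> by auto
    show "{u \<in> {1..n}. xi u < t} \<noteq> {u \<in> {1..n}. xi u < t'}"
      using v \<open>t < t'\<close> by blast
  qed
  then show "sbw_rank xi n t < sbw_rank xi n t'"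
    unfolding sbw_rank_def by (simp add: psubset_card_mono)
qed

lemma sbw_perm_eq_the_inv_into:
  "sbw_perm xi n = the_inv_into {1..n} (\<lambda>v. sbw_rank xi n (xi v))"
  by (simp add: fun_eq_iff sbw_perm_def the_inv_into_def sbw_rank_def)

lemma bij_betw_sbw_rank:
  assumes "inj_on xi {1..n}"
  shows "bij_betw (\<lambda>v. sbw_rank xi n (xi v)) {1..n} {1..n}"
proof -
  have inj: "inj_on (\<lambda>v. sbw_rank xi n (xi v)) {1..n}"
    using comp_inj_on[OF assms strict_mono_on_imp_inj_on[OF strict_mono_on_sbw_rank]]
    by (simp add: comp_def)
  have "sbw_rank xi n (xi v) \<in> {1..n}" if "v \<in> {1..n}" for v
  proof -
    have "card {u \<in> {1..n}. xi u < xi v} \<le> card ({1..n} - {v})"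
      by (intro card_mono) auto
    also have "\<dots> < card {1..n}"
      using that by (intro card_Diff1_less) auto
    finally show ?thesis
      by (simp add: sbw_rank_def)
  qed
  then have "(\<lambda>v. sbw_rank xi n (xi v)) ` {1..n} = {1..n}"
    using inj by (intro endo_inj_surj) auto
  then show ?thesis using inj by (simp add: bij_betw_def)
qed

lemma bij_betw_sbw_perm:
  "inj_on xi {1..n} \<Longrightarrow> bij_betw (sbw_perm xi n) {1..n} {1..n}"
  unfolding sbw_perm_eq_the_inv_into by (rule bij_betw_the_inv_into[OF bij_betw_sbw_rank])

lemma sbw_perm_in: "inj_on xi {1..n} \<Longrightarrow> i \<in> {1..n} \<Longrightarrow> sbw_perm xi n i \<in> {1..n}"
  using bij_betw_sbw_perm bij_betwE by blast

lemma sbw_rank_ostat: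
  "inj_on xi {1..n} \<Longrightarrow> i \<in> {1..n} \<Longrightarrow> sbw_rank xi n (sbw_ostat xi n i) = i"
  unfolding sbw_ostat_def sbw_perm_eq_the_inv_into
  using f_the_inv_into_f_bij_betw[OF bij_betw_sbw_rank] by blast

lemma sbw_ostat_less_iff:
  assumes "inj_on xi {1..n}" "u \<in> {1..n}" "a \<in> {1..n}"
  shows "sbw_ostat xi n u < sbw_ostat xi n a \<longleftrightarrow> u < a"
proof -
  have "sbw_ostat xi n i \<in> xi ` {1..n}" if "i \<in> {1..n}" for i
    using sbw_perm_in[OF assms(1) that] by (simp add: sbw_ostat_def)
  then show ?thesis
    using strict_mono_on_less[OF strict_mono_on_sbw_rank] sbw_rank_ostat[OF assms(1)] assms(2,3)
    by metis
qed

lemma sbw_ostat_le_iff: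
  "inj_on xi {1..n} \<Longrightarrow> u \<in> {1..n} \<Longrightarrow> a \<in> {1..n} \<Longrightarrow>
    sbw_ostat xi n u \<le> sbw_ostat xi n a \<longleftrightarrow> u \<le> a"
  using sbw_ostat_less_iff[of xi n a u] by (metis not_less)

lemma sum_if_clock_reindex_sbw_perm:
  assumes "inj_on xi {1..n}"
  shows "(\<Sum>i\<in>{1..n}. if P (xi i) then x i else 0)
       = (\<Sum>u\<in>{u \<in> {1..n}. P (sbw_ostat xi n u)}. x (sbw_perm xi n u))"
proof -
  have "(\<Sum>i\<in>{1..n}. if P (xi i) then x i else 0)
      = (\<Sum>u\<in>{1..n}. if P (sbw_ostat xi n u) then x (sbw_perm xi n u) else 0)"
    unfolding sbw_ostat_def by (rule sum.reindex_bij_betw[OF bij_betw_sbw_perm[OF assms], symmetric])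
  also have "\<dots> = (\<Sum>u\<in>{u \<in> {1..n}. P (sbw_ostat xi n u)}. x (sbw_perm xi n u))"
    by (rule sum.inter_filter[symmetric]) simp
  finally show ?thesis .
qed

subsection \<open>The walk at the clock times\<close>

lemma sbw_Z_left_eq:
  "sbw_Z_left x xi n q u = (\<Sum>i\<in>{1..n}. if xi i / q < u then x i else 0) - u"
proof -
  let ?C = "\<Sum>i\<in>{1..n}. if xi i / q < u then x i else 0"
  have "eventually (\<lambda>s. xi i / q \<le> s \<longleftrightarrow> xi i / q < u) (at_left u)" for i
  proof (cases "xi i / q < u")
    case True
    show ?thesis
      using eventually_at_left_real[OF True] by eventually_elim (use True in auto)
  next
    case False
    have "u - 1 < u" by simp
    from eventually_at_left_real[OF this] show ?thesis
      by eventually_elim (use False in auto)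
  qed
  then have "eventually (\<lambda>s. \<forall>i\<in>{1..n}. xi i / q \<le> s \<longleftrightarrow> xi i / q < u) (at_left u)"
    by (simp add: eventually_ball_finite)
  then have "eventually (\<lambda>s. ?C - s = sbw_Z x xi n q s) (at_left u)"
    by eventually_elim (auto simp: sbw_Z_def intro!: sum.cong)
  moreover have "((\<lambda>s. ?C - s) \<longlongrightarrow> ?C - u) (at_left u)"
    by (intro tendsto_intros tendsto_ident_at)
  ultimately have "(sbw_Z x xi n q \<longlongrightarrow> ?C - u) (at_left u)"
    by (rule Lim_transform_eventually[rotated])
  then show ?thesis
    unfolding sbw_Z_left_def by (intro tendsto_Lim) auto
qed

lemma sbw_Z_at_ostat:
  assumes "inj_on xi {1..n}" "a \<in> {1..n}" "0 < q"
  shows "sbw_Z x xi n q (sbw_ostat xi n a / q)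
       = (\<Sum>u=1..a. x (sbw_perm xi n u)) - sbw_ostat xi n a / q"
proof -
  have "\<And>t. t / q \<le> sbw_ostat xi n a / q \<longleftrightarrow> t \<le> sbw_ostat xi n a"
    using assms(3) by (simp add: divide_le_cancel)
  moreover have "{u \<in> {1..n}. sbw_ostat xi n u \<le> sbw_ostat xi n a} = {1..a}"
    using sbw_ostat_le_iff[OF assms(1) _ assms(2)] assms(2) by auto
  ultimately show ?thesis
    unfolding sbw_Z_def
    by (simp only: sum_if_clock_reindex_sbw_perm[OF assms(1), of "\<lambda>t. t \<le> sbw_ostat xi n a"])
qed

lemma sbw_Z_left_at_ostat:
  assumes "inj_on xi {1..n}" "a \<in> {1..n}" "0 < q"
  shows "sbw_Z_left x xi n q (sbw_ostat xi n a / q)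
       = (\<Sum>u=1..<a. x (sbw_perm xi n u)) - sbw_ostat xi n a / q"
proof -
  have "\<And>t. t / q < sbw_ostat xi n a / q \<longleftrightarrow> t < sbw_ostat xi n a"
    using assms(3) by (simp add: divide_less_cancel)
  moreover have "{u \<in> {1..n}. sbw_ostat xi n u < sbw_ostat xi n a} = {1..<a}"
    using sbw_ostat_less_iff[OF assms(1) _ assms(2)] assms(2) by auto
  ultimately show ?thesis
    unfolding sbw_Z_left_eq
    by (simp only: sum_if_clock_reindex_sbw_perm[OF assms(1), of "\<lambda>t. t < sbw_ostat xi n a"])
qed

lemma sbw_Z_jump_at_ostat:
  assumes "inj_on xi {1..n}" "a \<in> {1..n}" "0 < q"
  shows "sbw_Z x xi n q (sbw_ostat xi n a / q)
       = sbw_Z_left x xi n q (sbw_ostat xi n a / q) + x (sbw_perm xi n a)"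
  using assms sbw_Z_at_ostat[OF assms] sbw_Z_left_at_ostat[OF assms]
  by (simp add: atLeastLessThanSuc_atLeastAtMost[symmetric] del: atLeastLessThanSuc_atLeastAtMost)

lemma sbw_Z_left_ostat_diff:
  assumes "inj_on xi {1..n}" "a \<in> {1..n}" "b \<in> {1..n}" "a \<le> b" "0 < q"
  shows "sbw_Z_left x xi n q (sbw_ostat xi n b / q) - sbw_Z_left x xi n q (sbw_ostat xi n a / q)
       = (\<Sum>u=a..<b. x (sbw_perm xi n u)) - (sbw_ostat xi n b - sbw_ostat xi n a) / q"
proof -
  have "(\<Sum>u=1..<b. x (sbw_perm xi n u)) = (\<Sum>u=1..<a. x (sbw_perm xi n u)) + (\<Sum>u=a..<b. x (sbw_perm xi n u))"
    by (rule sum.atLeastLessThan_concat[symmetric]) (use assms in auto)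
  then show ?thesis
    using assms by (simp add: sbw_Z_left_at_ostat diff_divide_distrib)
qed

subsection \<open>Trees of the forest and their merge times\<close>

lemma snd_sbw_iv_1:
  "snd (sbw_iv x xi n q 1) = sbw_ostat xi n 1 / q + x (sbw_perm xi n 1)"
  by (simp add: One_nat_def Let_def)

lemma snd_sbw_iv_Suc:
  "1 \<le> i \<Longrightarrow> snd (sbw_iv x xi n q (Suc i))
     = max (snd (sbw_iv x xi n q i)) (sbw_ostat xi n (Suc i) / q) + x (sbw_perm xi n (Suc i))"
  by (auto simp: Let_def max_def split: prod.split)

lemma isCont_snd_sbw_iv:
  assumes "t \<noteq> 0" "1 \<le> i"
  shows "isCont (\<lambda>q. snd (sbw_iv x xi n q i)) t"
  using assms(2)
proof (induction i rule: dec_induct)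
  case base
  show ?case
    using assms(1) by (simp only: snd_sbw_iv_1) (intro continuous_intros)
next
  case (step i)
  have "isCont (\<lambda>q. sbw_ostat xi n (Suc i) / q) t"
    using assms(1) by (intro continuous_intros) auto
  then have "isCont (\<lambda>q. max (snd (sbw_iv x xi n q i)) (sbw_ostat xi n (Suc i) / q)
                   + x (sbw_perm xi n (Suc i))) t"
    by (rule continuous_add[OF continuous_max[OF step.IH] continuous_const])
  then show ?case
    by (simp only: snd_sbw_iv_Suc[OF step.hyps(1)])
qed

lemma sbw_root_1: "sbw_root x xi n q 1"
  by (simp add: sbw_root_def)

lemma sbw_root_Suc_iff:
  "1 \<le> i \<Longrightarrow> sbw_root x xi n q (Suc i) \<longleftrightarrow> snd (sbw_iv x xi n q i) < sbw_ostat xi n (Suc i) / q"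
  by (auto simp: sbw_root_def not_le)

lemma snd_sbw_iv_root:
  assumes "1 \<le> i" "sbw_root x xi n q i"
  shows "snd (sbw_iv x xi n q i) = sbw_ostat xi n i / q + x (sbw_perm xi n i)"
proof (cases "i = 1")
  case True
  then show ?thesis by (simp add: Let_def)
next
  case False
  then obtain i' where "i = Suc i'" "1 \<le> i'"
    using assms(1) by (cases i) auto
  then show ?thesis
    using assms(2) snd_sbw_iv_Suc[of i'] sbw_root_Suc_iff[of i'] by simp
qed

lemma snd_sbw_iv_Suc_nonroot:
  "1 \<le> i \<Longrightarrow> \<not> sbw_root x xi n q (Suc i) \<Longrightarrow>
    snd (sbw_iv x xi n q (Suc i)) = snd (sbw_iv x xi n q i) + x (sbw_perm xi n (Suc i))"
  using snd_sbw_iv_Suc[of i] sbw_root_Suc_iff[of i] by simp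

lemma sbw_block_root_le: "1 \<le> i \<Longrightarrow> sbw_block_root x xi n q i \<le> i"
  unfolding sbw_block_root_def using sbw_root_1 by (subst Max_le_iff) auto

lemma sbw_block_root_root: "1 \<le> i \<Longrightarrow> sbw_root x xi n q i \<Longrightarrow> sbw_block_root x xi n q i = i"
  unfolding sbw_block_root_def by (intro Max_eqI) auto

lemma sbw_block_root_Suc_nonroot:
  assumes "\<not> sbw_root x xi n q (Suc i)"
  shows "sbw_block_root x xi n q (Suc i) = sbw_block_root x xi n q i"
proof -
  have "{r \<in> {1..Suc i}. sbw_root x xi n q r} = {r \<in> {1..i}. sbw_root x xi n q r}"
    by (rule Collect_cong) (use assms in \<open>auto simp: le_Suc_eq\<close>)
  then show ?thesis
    unfolding sbw_block_root_def by simp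
qed

lemma sbw_block_root_mono:
  "1 \<le> i \<Longrightarrow> i \<le> i' \<Longrightarrow> sbw_block_root x xi n q i \<le> sbw_block_root x xi n q i'"
  unfolding sbw_block_root_def using sbw_root_1 by (intro Max_mono) auto

lemma sbw_perm_in_sbw_comp_iff:
  assumes "inj_on xi {1..n}" "l \<in> {1..n}"
  shows "sbw_perm xi n l \<in> sbw_comp x xi n q j
           \<longleftrightarrow> sbw_block_root x xi n q l = sbw_block_root x xi n q j"
  unfolding sbw_comp_def
  by (subst inj_on_image_mem_iff[OF bij_betw_imp_inj_on[OF bij_betw_sbw_perm[OF assms(1)]]])
     (use assms(2) in auto)

lemma sbw_comp_eq_imp_roots:
  assumes inj: "inj_on xi {1..n}" and jk: "1 \<le> j" "j \<le> k" "k < n"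
    and comp: "sbw_comp x xi n s j = sbw_perm xi n ` {j..k}"
  shows "sbw_root x xi n s j"
    and "\<And>i. j < i \<Longrightarrow> i \<le> k \<Longrightarrow> \<not> sbw_root x xi n s i"
    and "sbw_root x xi n s (Suc k)"
proof -
  let ?br = "sbw_block_root x xi n s"
  have "sbw_perm xi n ` {r \<in> {1..n}. ?br r = ?br j} = sbw_perm xi n ` {j..k}"
    using comp unfolding sbw_comp_def .
  moreover have "{r \<in> {1..n}. ?br r = ?br j} \<subseteq> {1..n}" "{j..k} \<subseteq> {1..n}"
    using jk by auto
  ultimately have "{r \<in> {1..n}. ?br r = ?br j} = {j..k}"
    using inj_on_image_eq_iff[OF bij_betw_imp_inj_on[OF bij_betw_sbw_perm[OF inj]]] by blast
  then have block: "r \<in> {1..n} \<and> ?br r = ?br j \<longleftrightarrow> j \<le> r \<and> r \<le> k" for r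
    unfolding set_eq_iff by simp
  show root_j: "sbw_root x xi n s j"
  proof (rule ccontr)
    assume not_root: "\<not> sbw_root x xi n s j"
    then have "j \<noteq> 1"
      using sbw_root_1 by metis
    then obtain j' where j': "j = Suc j'" "1 \<le> j'"
      using jk(1) by (cases j) auto
    then have "?br j' = ?br j"
      using sbw_block_root_Suc_nonroot[of x xi n s j'] not_root by simp
    then show False
      using block[of j'] j' jk by simp
  qed
  then have br_j: "?br j = j"
    using jk(1) by (rule sbw_block_root_root[rotated])
  show "\<not> sbw_root x xi n s i" if "j < i" "i \<le> k" for i
  proof
    assume "sbw_root x xi n s i"
    then have "?br i = i"
      using that jk by (intro sbw_block_root_root) auto
    then show False
      using block[of i] br_j that jk by simp
  qed
  show "sbw_root x xi n s (Suc k)"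
  proof (rule ccontr)
    assume "\<not> sbw_root x xi n s (Suc k)"
    then have "?br (Suc k) = ?br k"
      by (rule sbw_block_root_Suc_nonroot)
    then show False
      using block[of k] block[of "Suc k"] jk by simp
  qed
qed

lemma snd_sbw_iv_block:
  assumes "1 \<le> j" "j \<le> k" "sbw_root x xi n s j"
    and "\<And>i. j < i \<Longrightarrow> i \<le> k \<Longrightarrow> \<not> sbw_root x xi n s i"
  shows "snd (sbw_iv x xi n s k) = sbw_ostat xi n j / s + (\<Sum>u=j..k. x (sbw_perm xi n u))"
  using assms(2,4)
proof (induction k rule: dec_induct)
  case base
  show ?case
    using snd_sbw_iv_root[OF assms(1,3)] by simp
next
  case (step i)
  then show ?case
    using snd_sbw_iv_Suc_nonroot[of i x xi n s] assms(1) by simp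
qed

lemma sbw_merge_at_imp_not_root:
  assumes inj: "inj_on xi {1..n}" and jkl: "1 \<le> j" "j \<le> k" "k < l" "l \<le> n"
    and "sbw_merge_at x xi n j k l t"
  shows "\<not> sbw_root x xi n t (Suc k)"
proof
  let ?br = "sbw_block_root x xi n t"
  assume "sbw_root x xi n t (Suc k)"
  then have "Suc k = ?br (Suc k)"
    by (simp add: sbw_block_root_root)
  also have "\<dots> \<le> ?br l"
    using jkl by (intro sbw_block_root_mono) auto
  also have "?br l = ?br j"
    using assms(6) jkl sbw_perm_in_sbw_comp_iff[OF inj, of l]
    unfolding sbw_merge_at_def by force
  also have "\<dots> \<le> k"
    using sbw_block_root_le[OF jkl(1), where x=x and xi=xi and n=n and q=t] jkl(2) by linarith
  finally show False by simp
qed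

lemma isCont_le_if_eventually_le_at_left:
  fixes f g :: "real \<Rightarrow> real"
  assumes "eventually (\<lambda>s. f s \<le> g s) (at_left t)" "isCont f t" "isCont g t"
  shows "f t \<le> g t"
proof (rule tendsto_le[OF trivial_limit_at_left_real])
  show "(g \<longlongrightarrow> g t) (at_left t)" "(f \<longlongrightarrow> f t) (at_left t)"
    using assms(2,3) by (simp_all add: isCont_def filterlim_at_split)
qed (rule assms(1))

lemma sbw_merge_at_imp_time:
  assumes inj: "inj_on xi {1..n}" and jkl: "1 \<le> j" "j \<le> k" "k < l" "l \<le> n"
    and merge: "sbw_merge_at x xi n j k l t"
  shows "t * (\<Sum>u=j..k. x (sbw_perm xi n u)) = sbw_ostat xi n (Suc k) - sbw_ostat xi n j"
proof -
  define S where "S = (\<Sum>u=j..k. x (sbw_perm xi n u))"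
  define b where "b = (\<lambda>s. snd (sbw_iv x xi n s k))"
  let ?oj = "sbw_ostat xi n j" and ?ok = "sbw_ostat xi n (Suc k)"
  have "0 < t"
    and before: "eventually (\<lambda>s. sbw_comp x xi n s j = sbw_perm xi n ` {j..k}) (at_left t)"
    using merge unfolding sbw_merge_at_def by (auto elim: eventually_mono)
  have "k < n" using jkl by simp
  have block_before: "eventually (\<lambda>s. b s = ?oj / s + S \<and> ?oj / s + S < ?ok / s) (at_left t)"
    using before
  proof eventually_elim
    case (elim s)
    note roots = sbw_comp_eq_imp_roots[OF inj jkl(1,2) \<open>k < n\<close> elim]
    show ?case
      using snd_sbw_iv_block[OF jkl(1,2) roots(1,2)] roots(3) sbw_root_Suc_iff[of k] jkl
      by (simp add: b_def S_def)
  qed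
  have cont: "isCont b t" "isCont (\<lambda>s. ?oj / s + S) t" "isCont (\<lambda>s. ?ok / s) t"
    using isCont_snd_sbw_iv[of t k] \<open>0 < t\<close> jkl unfolding b_def
    by (auto intro!: continuous_intros)
  have "\<not> sbw_root x xi n t (Suc k)"
    by (rule sbw_merge_at_imp_not_root[OF inj jkl merge])
  then have "?ok / t \<le> b t"
    using sbw_root_Suc_iff[of k] jkl by (simp add: b_def not_less)
  moreover have "b t \<le> ?oj / t + S"
  proof (rule isCont_le_if_eventually_le_at_left[OF _ cont(1,2)])
    show "eventually (\<lambda>s. b s \<le> ?oj / s + S) (at_left t)"
      using block_before by eventually_elim simp
  qed
  moreover have "?oj / t + S \<le> ?ok / t"
  proof (rule isCont_le_if_eventually_le_at_left[OF _ cont(2,3)])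
    show "eventually (\<lambda>s. ?oj / s + S \<le> ?ok / s) (at_left t)"
      using block_before by eventually_elim simp
  qed
  ultimately have "?ok / t = ?oj / t + S"
    by linarith
  then show ?thesis
    using \<open>0 < t\<close> by (simp add: S_def field_simps)
qed

lemma sum_masses_pos:
  fixes x :: "nat \<Rightarrow> real"
  assumes "inj_on xi {1..n}" "\<forall>i\<in>{1..n}. 0 < x i" "1 \<le> j" "j \<le> k" "k \<le> n"
  shows "0 < (\<Sum>u=j..k. x (sbw_perm xi n u))"
proof (rule sum_pos)
  fix u assume "u \<in> {j..k}"
  then have "sbw_perm xi n u \<in> {1..n}"
    using assms sbw_perm_in[OF assms(1), of u] by auto
  then show "0 < x (sbw_perm xi n u)"
    using assms(2) by blast
qed (use assms in auto)

lemma sbw_T_cases: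
  fixes x :: "nat \<Rightarrow> real"
  assumes inj: "inj_on xi {1..n}" and pos: "\<forall>i\<in>{1..n}. 0 < x i"
    and jkl: "1 \<le> j" "j \<le> k" "k < l" "l \<le> n"
  defines "S \<equiv> \<Sum>u=j..k. x (sbw_perm xi n u)"
  shows "sbw_T x xi n j k l = \<infinity>
       \<or> sbw_T x xi n j k l = ereal ((sbw_ostat xi n (Suc k) - sbw_ostat xi n j) / S)"
proof -
  have "0 < S"
    unfolding S_def by (rule sum_masses_pos[OF inj pos]) (use jkl in auto)
  have "t = (sbw_ostat xi n (Suc k) - sbw_ostat xi n j) / S" if "sbw_merge_at x xi n j k l t" for t
    using sbw_merge_at_imp_time[OF inj jkl that] \<open>0 < S\<close>
    unfolding S_def[symmetric] by (simp add: eq_divide_eq)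
  then have "{ereal t | t. sbw_merge_at x xi n j k l t}
      \<subseteq> {ereal ((sbw_ostat xi n (Suc k) - sbw_ostat xi n j) / S)}"
    by blast
  then show ?thesis
    using jkl by (auto simp: sbw_T_def top_ereal_def dest!: subset_singletonD)
qed

subsection \<open>The rate--area identity\<close>

lemma sbw_rate_area_diagonal:
  assumes "inj_on xi {1..n}" "l \<in> {1..n}" "0 < x (sbw_perm xi n l)" "0 < q"
  shows "(q - real_of_ereal (sbw_T x xi n l l l)) * sbw_rate x xi n l l l
           = q * measure lborel (sbw_region x xi n l l l q)"
  using measure_lborel_right_triangle[OF assms(3)] sbw_Z_jump_at_ostat[OF assms(1,2,4)] assms(4)
  by (simp add: sbw_T_def sbw_rate_def sbw_region_def Let_def)

lemma sbw_rate_area_merge: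
  assumes inj: "inj_on xi {1..n}" and pos: "\<forall>i\<in>{1..n}. 0 < x i"
    and jkl: "1 \<le> j" "j \<le> k" "k < l" "l \<le> n" and "0 < q"
    and T_le: "sbw_T x xi n j k l \<le> ereal q"
  shows "(q - real_of_ereal (sbw_T x xi n j k l)) * sbw_rate x xi n j k l
           = q * measure lborel (sbw_region x xi n j k l q)"
proof -
  let ?m = "\<lambda>u. x (sbw_perm xi n u)"
  define S where "S = (\<Sum>u=j..k. ?m u)"
  define t where "t = (sbw_ostat xi n (Suc k) - sbw_ostat xi n j) / S"
  define s where "s = sbw_ostat xi n l / q"
  define h1 where "h1 = sbw_Z_left x xi n q (sbw_ostat xi n j / q)"
  define h2 where "h2 = sbw_Z_left x xi n q (sbw_ostat xi n (Suc k) / q)"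
  have "0 < S"
    unfolding S_def using jkl by (auto intro!: sum_masses_pos[OF inj pos])
  have T: "sbw_T x xi n j k l = ereal t"
    using sbw_T_cases[OF inj pos jkl] T_le unfolding S_def t_def by auto
  have "h2 - h1 = S - (sbw_ostat xi n (Suc k) - sbw_ostat xi n j) / q"
    unfolding h1_def h2_def S_def using jkl \<open>0 < q\<close>
    by (simp add: sbw_Z_left_ostat_diff[OF inj] atLeastLessThanSuc_atLeastAtMost)
  also have "sbw_ostat xi n (Suc k) - sbw_ostat xi n j = t * S"
    using \<open>0 < S\<close> by (simp add: t_def)
  finally have "h2 - h1 = S - t * S / q" .
  moreover have "t * S / q \<le> S"
    using T T_le \<open>0 < S\<close> \<open>0 < q\<close> by (simp add: field_simps)
  ultimately have height: "\<bar>h1 - h2\<bar> = S - t * S / q"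
    by simp
  have "l \<in> {1..n}"
    using jkl by simp
  then have "0 < ?m l"
    using pos sbw_perm_in[OF inj] by blast
  have "measure lborel (sbw_region x xi n j k l q)
      = \<bar>sbw_Z_left x xi n q s - sbw_Z x xi n q s\<bar> * \<bar>h1 - h2\<bar>"
    using jkl by (simp add: sbw_region_def Let_def s_def h1_def h2_def measure_lborel_parallelogram)
  also have "\<dots> = ?m l * (S - t * S / q)"
    using sbw_Z_jump_at_ostat[OF inj \<open>l \<in> {1..n}\<close> \<open>0 < q\<close>] height \<open>0 < ?m l\<close>
    by (simp add: s_def)
  finally show ?thesis
    using T \<open>0 < q\<close> jkl by (simp add: sbw_rate_def S_def[symmetric] field_simps)
qed

lemma sbw_rate_area_identity:
  assumes "inj_on xi {1..n}" "\<forall>i\<in>{1..n}. 0 < x i"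
    and "1 \<le> j" "j \<le> k" "k \<le> l" "l \<le> n" "k = l \<longrightarrow> j = l" "0 < q"
    and "sbw_T x xi n j k l \<le> ereal q"
  shows "(q - real_of_ereal (sbw_T x xi n j k l)) * sbw_rate x xi n j k l
           = q * measure lborel (sbw_region x xi n j k l q)"
proof (cases "k = l")
  case True
  have "l \<in> {1..n}"
    using assms by auto
  then show ?thesis
    using True assms(2,7) sbw_perm_in[OF assms(1)]
      sbw_rate_area_diagonal[OF assms(1) \<open>l \<in> {1..n}\<close> _ assms(8)] by auto
next
  case False
  then show ?thesis
    using assms(5) by (intro sbw_rate_area_merge[OF assms(1-4) _ assms(6,8,9)]) simp
qed

theorem proposition1:
  fixes M :: "'a measure" and x :: "nat \<Rightarrow> real" and \<xi> :: "nat \<Rightarrow> 'a \<Rightarrow> real"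
    and n j k l :: nat and q :: real
  assumes "prob_space M"
    and "1 \<le> n"
    and "\<forall>i\<in>{1..n}. 0 < x i"
    and "\<forall>i\<in>{1..n}. \<forall>i'\<in>{1..n}. i \<le> i' \<longrightarrow> x i' \<le> x i"
    and "prob_space.indep_vars M (\<lambda>_. borel) \<xi> {1..n}"
    and "\<forall>i\<in>{1..n}. distributed M lborel (\<xi> i) (exponential_density (x i))"
    and "1 \<le> j" "j \<le> k" "k \<le> l" "l \<le> n" "k = l \<longrightarrow> j = l"
    and "0 < q"
  shows "AE \<omega> in M. sbw_T x (\<lambda>i. \<xi> i \<omega>) n j k l \<le> ereal q \<longrightarrow>
           (q - real_of_ereal (sbw_T x (\<lambda>i. \<xi> i \<omega>) n j k l)) * sbw_rate x (\<lambda>i. \<xi> i \<omega>) n j k l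
             = q * measure lborel (sbw_region x (\<lambda>i. \<xi> i \<omega>) n j k l q)"
proof -
  interpret prob_space M by fact
  have "AE \<omega> in M. inj_on (\<lambda>i. \<xi> i \<omega>) {1..n}"
    by (rule AE_inj_on_if_indep_vars_distributed[OF _ assms(5,6)]) simp
  then show ?thesis
    by eventually_elim (use assms(3,7-12) in \<open>auto intro: sbw_rate_area_identity\<close>)
qed

end
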